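(* Let $(L,[\cdot,\cdot,\cdot],\alpha,\omega)$ be a symplectic 3-Hom-Lie algebra. Then the trilinear operation $\{\cdot,\cdot,\cdot\}$ on $L$ determined by $$\omega(\{x,y,z\},\alpha(w))=-\omega(\alpha(z),[x,y,w])\quad\text{for all }x,y,z,w\in L$$ makes $(L,\{\cdot,\cdot,\cdot\},\alpha)$ a 3-Hom-pre-Lie algebra compatible with $L$, i.e. $\{x,y,z\}+\{y,z,x\}+\{z,x,y\}=[x,y,z]$ for all $x,y,z\in L$.
   Context: A 3-Hom-Lie algebra is a triple $(L,[\cdot,\cdot,\cdot],\alpha)$ with $[\cdot,\cdot,\cdot]:\wedge^3L\to L$ skew-symmetric trilinear and $\alpha$ linear satisfying $[\alpha(x),\alpha(y),[u,v,w]]=[[x,y,u],\alpha(v),\alpha(w)]+[\alpha(u),[x,y,v],\alpha(w)]+[\alpha(u),\alpha(v),[x,y,w]]$; it is regular if $\alpha$ is an algebra automorphism. A symplectic 3-Hom-Lie algebra $(L,[\cdot,\cdot,\cdot],\alpha,\omega)$ is a regular 3-Hom-Lie algebra with a nondegenerate skew-symmetric bilinear form $\omega$ such that $\omega(\alpha(x),\alpha(y))=\omega(x,y)$ and $\omega([x,y,z],\alpha(w))-\omega([y,z,w],\alpha(x))+\omega([z,w,x],\alpha(y))-\omega([w,x,y],\alpha(z))=0$ for all $x,y,z,w$. A 3-Hom-pre-Lie algebra is $(L,\{\cdot,\cdot,\cdot\},\alpha)$ with trilinear $\{\cdot,\cdot,\cdot\}$ such that, with $[x,y,z]_C=\{x,y,z\}+\{y,z,x\}+\{z,x,y\}$: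 $\{x,y,z\}=-\{y,x,z\}$; $\{\alpha(x),\alpha(y),\{z,u,v\}\}=\{[x,y,z]_C,\alpha(u),\alpha(v)\}+\{\alpha(z),[x,y,u]_C,\alpha(v)\}+\{\alpha(z),\alpha(u),\{x,y,v\}\}$; $\{[x,y,z]_C,\alpha(u),\alpha(v)\}=\{\alpha(x),\alpha(y),\{z,u,v\}\}+\{\alpha(y),\alpha(z),\{x,u,v\}\}+\{\alpha(z),\alpha(x),\{y,u,v\}\}$. *)

theory Defs
  imports Complex_Main
begin

definition trilinear ::
  "('k::field \<Rightarrow> 'v::ab_group_add \<Rightarrow> 'v) \<Rightarrow> ('v \<Rightarrow> 'v \<Rightarrow> 'v \<Rightarrow> 'v) \<Rightarrow> bool" where
  "trilinear scale T \<longleftrightarrow>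
     (\<forall>y z. Vector_Spaces.linear scale scale (\<lambda>x. T x y z)) \<and>
     (\<forall>x z. Vector_Spaces.linear scale scale (\<lambda>y. T x y z)) \<and>
     (\<forall>x y. Vector_Spaces.linear scale scale (\<lambda>z. T x y z))"

definition bilinear_form ::
  "('k::field \<Rightarrow> 'v::ab_group_add \<Rightarrow> 'v) \<Rightarrow> ('v \<Rightarrow> 'v \<Rightarrow> 'k) \<Rightarrow> bool" where
  "bilinear_form scale \<omega> \<longleftrightarrow>
     (\<forall>y. Vector_Spaces.linear scale (*) (\<lambda>x. \<omega> x y)) \<and>
     (\<forall>x. Vector_Spaces.linear scale (*) (\<lambda>y. \<omega> x y))"

definition skew3 :: "('v::ab_group_add \<Rightarrow> 'v \<Rightarrow> 'v \<Rightarrow> 'v) \<Rightarrow> bool" where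
  "skew3 B \<longleftrightarrow> (\<forall>x y z. B x y z = - B y x z \<and> B x y z = - B x z y)"

definition hom_lie3 ::
  "('k::field \<Rightarrow> 'v::ab_group_add \<Rightarrow> 'v) \<Rightarrow> ('v \<Rightarrow> 'v \<Rightarrow> 'v \<Rightarrow> 'v) \<Rightarrow> ('v \<Rightarrow> 'v) \<Rightarrow> bool" where
  "hom_lie3 scale B \<alpha> \<longleftrightarrow>
     trilinear scale B \<and> skew3 B \<and> Vector_Spaces.linear scale scale \<alpha> \<and>
     (\<forall>x y u v w. B (\<alpha> x) (\<alpha> y) (B u v w) =
        B (B x y u) (\<alpha> v) (\<alpha> w) + B (\<alpha> u) (B x y v) (\<alpha> w) + B (\<alpha> u) (\<alpha> v) (B x y w))"

definition regular_hom_lie3 ::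
  "('k::field \<Rightarrow> 'v::ab_group_add \<Rightarrow> 'v) \<Rightarrow> ('v \<Rightarrow> 'v \<Rightarrow> 'v \<Rightarrow> 'v) \<Rightarrow> ('v \<Rightarrow> 'v) \<Rightarrow> bool" where
  "regular_hom_lie3 scale B \<alpha> \<longleftrightarrow>
     hom_lie3 scale B \<alpha> \<and> bij \<alpha> \<and> (\<forall>x y z. \<alpha> (B x y z) = B (\<alpha> x) (\<alpha> y) (\<alpha> z))"

definition symplectic_hom_lie3 ::
  "('k::field \<Rightarrow> 'v::ab_group_add \<Rightarrow> 'v) \<Rightarrow> ('v \<Rightarrow> 'v \<Rightarrow> 'v \<Rightarrow> 'v) \<Rightarrow> ('v \<Rightarrow> 'v)
     \<Rightarrow> ('v \<Rightarrow> 'v \<Rightarrow> 'k) \<Rightarrow> bool" where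
  "symplectic_hom_lie3 scale B \<alpha> \<omega> \<longleftrightarrow>
     regular_hom_lie3 scale B \<alpha> \<and>
     bilinear_form scale \<omega> \<and>
     (\<forall>x y. \<omega> x y = - \<omega> y x) \<and>
     (\<forall>x. (\<forall>y. \<omega> x y = 0) \<longrightarrow> x = 0) \<and>
     (\<forall>x y. \<omega> (\<alpha> x) (\<alpha> y) = \<omega> x y) \<and>
     (\<forall>x y z w. \<omega> (B x y z) (\<alpha> w) - \<omega> (B y z w) (\<alpha> x)
                 + \<omega> (B z w x) (\<alpha> y) - \<omega> (B w x y) (\<alpha> z) = 0)"

definition hom_pre_lie3 ::
  "('k::field \<Rightarrow> 'v::ab_group_add \<Rightarrow> 'v) \<Rightarrow> ('v \<Rightarrow> 'v \<Rightarrow> 'v \<Rightarrow> 'v) \<Rightarrow> ('v \<Rightarrow> 'v) \<Rightarrow> bool" where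
  "hom_pre_lie3 scale P \<alpha> \<longleftrightarrow>
     (let C = (\<lambda>x y z. P x y z + P y z x + P z x y) in
       trilinear scale P \<and> Vector_Spaces.linear scale scale \<alpha> \<and>
       (\<forall>x y z. P x y z = - P y x z) \<and>
       (\<forall>x y z u v. P (\<alpha> x) (\<alpha> y) (P z u v) =
          P (C x y z) (\<alpha> u) (\<alpha> v) + P (\<alpha> z) (C x y u) (\<alpha> v) + P (\<alpha> z) (\<alpha> u) (P x y v)) \<and>
       (\<forall>x y z u v. P (C x y z) (\<alpha> u) (\<alpha> v) =
          P (\<alpha> x) (\<alpha> y) (P z u v) + P (\<alpha> y) (\<alpha> z) (P x u v) + P (\<alpha> z) (\<alpha> x) (P y u v)))"

end

theory Submission
  imports Defs
begin

text \<open>Since \<open>\<omega>\<close> is nondegenerate and \<open>L\<close> finite-dimensional, every linear functional is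
  represented by \<open>\<omega>\<close>, and \<open>\<alpha>\<close> is bijective, so the defining equation determines \<open>{x,y,z}\<close>
  uniquely. Every axiom of a 3-Hom-pre-Lie algebra is then checked by pairing both sides with
  an arbitrary \<open>\<alpha>(\<alpha>(t))\<close>: using the invariance of \<open>\<omega>\<close> under \<open>\<alpha>\<close> and \<open>\<alpha>([x,y,z]) = [\<alpha>x,\<alpha>y,\<alpha>z]\<close>,
  both sides become \<open>\<omega>(\<alpha>(\<alpha>(v)), \<dots>)\<close> of expressions in the bracket, and the two pre-Lie
  identities reduce to the fundamental identity and to a cyclic consequence of it. Compatibility
  \<open>{x,y,z} + {y,z,x} + {z,x,y} = [x,y,z]\<close> is the symplectic condition read through the
  defining equation.\<close>

lemma (in vector_space) finite_dimensional_if_finite_span: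
  assumes "finite S" and "span S = UNIV"
  shows "\<exists>Bs. finite_dimensional_vector_space scale Bs"
proof -
  obtain Bs where "independent Bs" and "UNIV \<subseteq> span Bs"
    using basis_exists[of UNIV] by blast
  moreover have "finite Bs"
    using independent_span_bound[OF assms(1) \<open>independent Bs\<close>] assms(2) by auto
  ultimately show ?thesis
    unfolding finite_dimensional_vector_space_def finite_dimensional_vector_space_axioms_def
    using vector_space_axioms by auto
qed

lemma vector_space_field_over_itself: "vector_space ((*) :: 'a::field \<Rightarrow> 'a \<Rightarrow> 'a)"
  unfolding vector_space_def by (simp add: algebra_simps)

context finite_dimensional_vector_space
begin

lemma linear_functionals_eq_on_Basis:
  assumes "Vector_Spaces.linear scale (*) g" and "Vector_Spaces.linear scale (*) h"
    and "\<And>b. b \<in> Basis \<Longrightarrow> g b = h b"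
  shows "g x = h x"
proof -
  interpret vector_space_pair scale "(*) :: 'a \<Rightarrow> 'a \<Rightarrow> 'a"
    unfolding vector_space_pair_def using vector_space_axioms vector_space_field_over_itself by blast
  show ?thesis
    using linear_eq_on[OF assms(1,2), of x Basis] assms(3) span_Basis by blast
qed

lemma Basis_coefficients_eq:
  assumes "(\<Sum>b\<in>Basis. c b *s b) = (\<Sum>b\<in>Basis. d b *s b)" and "b \<in> Basis"
  shows "c b = d b"
proof -
  have "(\<Sum>b\<in>Basis. (c b - d b) *s b) = 0"
    using assms(1) by (simp add: scale_left_diff_distrib sum_subtractf)
  then show ?thesis
    using independent_Basis assms(2) unfolding independent_explicit
    by (metis (no_types) eq_iff_diff_eq_0)
qed

text \<open>Riesz representation: \<open>x \<mapsto> \<omega> x\<close> is injective by nondegeneracy, hence onto the dual;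
  a functional is encoded by its values on \<open>Basis\<close>, i.e. \<open>\<omega> x\<close> by the coordinates \<open>coords x\<close>.\<close>

lemma nondegenerate_form_represents_functional:
  assumes \<omega>: "bilinear_form scale \<omega>" and nondeg: "\<forall>x. (\<forall>y. \<omega> x y = 0) \<longrightarrow> x = 0"
    and f: "Vector_Spaces.linear scale (*) f"
  shows "\<exists>x. \<forall>w. \<omega> x w = f w"
proof -
  have \<omega>_left: "Vector_Spaces.linear scale (*) (\<lambda>x. \<omega> x y)"
    and \<omega>_right: "Vector_Spaces.linear scale (*) (\<omega> x)" for x y
    using \<omega> unfolding bilinear_form_def by auto
  have zero_functional: "Vector_Spaces.linear scale (*) (\<lambda>_. 0 :: 'a)"
    using f unfolding Vector_Spaces.linear_iff by simp
  define coords where "coords x = (\<Sum>b\<in>Basis. \<omega> x b *s b)" for x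
  have "Vector_Spaces.linear scale scale coords"
    unfolding coords_def Vector_Spaces.linear_iff
    by (simp add: module_hom.add[OF module_hom_linearI[OF \<omega>_left]]
        module_hom.scale[OF module_hom_linearI[OF \<omega>_left]]
        scale_left_distrib sum.distrib scale_sum_right vector_space_axioms)
  moreover have "inj coords"
  proof -
    interpret coords: Vector_Spaces.linear scale scale coords by fact
    have "x = 0" if "coords x = 0" for x
    proof -
      have "\<omega> x b = 0" if "b \<in> Basis" for b
        using Basis_coefficients_eq[of "\<omega> x" "\<lambda>_. 0" b] \<open>coords x = 0\<close> that
        unfolding coords_def by simp
      then have "\<omega> x w = 0" for w
        using linear_functionals_eq_on_Basis[OF \<omega>_right zero_functional] by blast
      then show ?thesis
        using nondeg by blast
    qed
    then show ?thesis
      using coords.inj_iff_eq_0 by blast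
  qed
  ultimately obtain x where "coords x = (\<Sum>b\<in>Basis. f b *s b)"
    using linear_inj_imp_surj by (metis surjD)
  then have "\<omega> x b = f b" if "b \<in> Basis" for b
    using Basis_coefficients_eq that unfolding coords_def by blast
  then show ?thesis
    using linear_functionals_eq_on_Basis[OF \<omega>_right f] by blast
qed

end

lemma skew_fundamental_identity_cyclic:
  fixes B :: "'v::ab_group_add \<Rightarrow> 'v \<Rightarrow> 'v \<Rightarrow> 'v"
  assumes skew: "skew3 B" and neg3: "\<And>a b c. B a b (- c) = - B a b c"
    and fundamental: "\<And>x y u v w. B (\<alpha> x) (\<alpha> y) (B u v w) =
        B (B x y u) (\<alpha> v) (\<alpha> w) + B (\<alpha> u) (B x y v) (\<alpha> w) + B (\<alpha> u) (\<alpha> v) (B x y w)"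
  shows "B (B x y z) (\<alpha> u) (\<alpha> t) + B (\<alpha> z) (\<alpha> u) (B x y t) + B (\<alpha> x) (\<alpha> u) (B y z t)
     + B (\<alpha> y) (\<alpha> u) (B z x t) = 0"
proof -
  have skew1: "B a b c = - B b a c" and skew2: "B a b c = - B a c b" for a b c
    using skew unfolding skew3_def by blast+
  have cyclic: "B a b c = B b c a" for a b c
    using skew1[of a b c] skew2[of b a c] by simp
  text \<open>Expand \<open>[\<alpha>x,\<alpha>t,[y,z,u]]\<close> and \<open>[\<alpha>y,\<alpha>z,[x,u,t]]\<close> by the fundamental identity; each
    contains the other up to sign, and eliminating it leaves the claim.\<close>
  have "B (\<alpha> x) (\<alpha> t) (B y z u) = - B (\<alpha> z) (\<alpha> u) (B x y t) - B (\<alpha> y) (\<alpha> u) (B z x t)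
      - B (\<alpha> y) (\<alpha> z) (B x u t)"
  proof -
    have "B (B x t y) (\<alpha> z) (\<alpha> u) = - B (\<alpha> z) (\<alpha> u) (B x y t)"
      using cyclic[of "B x t y"] skew2[of x t y] neg3 by simp
    moreover have "B (\<alpha> y) (B x t z) (\<alpha> u) = - B (\<alpha> y) (\<alpha> u) (B z x t)"
      using skew2[of "\<alpha> y" "B x t z"] cyclic[of z x t] by simp
    moreover have "B (\<alpha> y) (\<alpha> z) (B x t u) = - B (\<alpha> y) (\<alpha> z) (B x u t)"
      using skew2[of x t u] neg3 by simp
    ultimately show ?thesis
      using fundamental[of x t y z u] by simp
  qed
  moreover have "B (\<alpha> y) (\<alpha> z) (B x u t) = B (B x y z) (\<alpha> u) (\<alpha> t)
      - B (\<alpha> x) (\<alpha> t) (B y z u) + B (\<alpha> x) (\<alpha> u) (B y z t)"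
    using fundamental[of y z x u t] cyclic[of x y z] skew2[of "\<alpha> x" "B y z u" "\<alpha> t"] by simp
  ultimately show ?thesis
    by (simp add: algebra_simps)
qed

locale symplectic_hom_lie3_space = vector_space scale
  for scale :: "'k::field \<Rightarrow> 'v::ab_group_add \<Rightarrow> 'v" +
  fixes B :: "'v \<Rightarrow> 'v \<Rightarrow> 'v \<Rightarrow> 'v" and \<alpha> :: "'v \<Rightarrow> 'v" and \<omega> :: "'v \<Rightarrow> 'v \<Rightarrow> 'k"
  assumes symplectic: "symplectic_hom_lie3 scale B \<alpha> \<omega>"
begin

lemma
  shows B_trilinear: "trilinear scale B"
    and B_skew: "skew3 B"
    and alpha_linear: "Vector_Spaces.linear scale scale \<alpha>"
    and fundamental_identity: "B (\<alpha> x) (\<alpha> y) (B u v w) =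
        B (B x y u) (\<alpha> v) (\<alpha> w) + B (\<alpha> u) (B x y v) (\<alpha> w) + B (\<alpha> u) (\<alpha> v) (B x y w)"
    and alpha_bij: "bij \<alpha>"
    and alpha_B: "\<alpha> (B x y z) = B (\<alpha> x) (\<alpha> y) (\<alpha> z)"
    and omega_bilinear: "bilinear_form scale \<omega>"
    and omega_skew: "\<omega> x y = - \<omega> y x"
    and omega_nondegenerate: "\<forall>x. (\<forall>y. \<omega> x y = 0) \<longrightarrow> x = 0"
    and omega_alpha: "\<omega> (\<alpha> x) (\<alpha> y) = \<omega> x y"
    and omega_B_cyclic: "\<omega> (B x y z) (\<alpha> w) - \<omega> (B y z w) (\<alpha> x)
                 + \<omega> (B z w x) (\<alpha> y) - \<omega> (B w x y) (\<alpha> z) = 0"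
  using symplectic unfolding symplectic_hom_lie3_def regular_hom_lie3_def hom_lie3_def by blast+

lemma B_skew_left: "B x y z = - B y x z" and B_skew_right: "B x y z = - B x z y"
  using B_skew unfolding skew3_def by blast+

lemma B_cyclic: "B x y z = B y z x"
  using B_skew_left[of x y z] B_skew_right[of y x z] by simp

lemma B_linear1: "Vector_Spaces.linear scale scale (\<lambda>x. B x y z)"
  and B_linear2: "Vector_Spaces.linear scale scale (\<lambda>y. B x y z)"
  and B_linear3: "Vector_Spaces.linear scale scale (B x y)"
  using B_trilinear unfolding trilinear_def by auto

lemmas B_add1 = module_hom.add[OF module_hom_linearI[OF B_linear1]]
  and B_scale1 = module_hom.scale[OF module_hom_linearI[OF B_linear1]]
  and B_add2 = module_hom.add[OF module_hom_linearI[OF B_linear2]]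
  and B_scale2 = module_hom.scale[OF module_hom_linearI[OF B_linear2]]
  and B_add3 = module_hom.add[OF module_hom_linearI[OF B_linear3]]
  and B_scale3 = module_hom.scale[OF module_hom_linearI[OF B_linear3]]
  and B_minus3 = module_hom.neg[OF module_hom_linearI[OF B_linear3]]

lemma omega_linear_left: "Vector_Spaces.linear scale (*) (\<lambda>x. \<omega> x y)"
  and omega_linear_right: "Vector_Spaces.linear scale (*) (\<omega> x)"
  using omega_bilinear unfolding bilinear_form_def by auto

lemmas omega_add_left = module_hom.add[OF module_hom_linearI[OF omega_linear_left]]
  and omega_scale_left = module_hom.scale[OF module_hom_linearI[OF omega_linear_left]]
  and omega_minus_left = module_hom.neg[OF module_hom_linearI[OF omega_linear_left]]
  and omega_diff_left = module_hom.diff[OF module_hom_linearI[OF omega_linear_left]]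
  and omega_add_right = module_hom.add[OF module_hom_linearI[OF omega_linear_right]]
  and omega_scale_right = module_hom.scale[OF module_hom_linearI[OF omega_linear_right]]
  and omega_minus_right = module_hom.neg[OF module_hom_linearI[OF omega_linear_right]]
  and omega_diff_right = module_hom.diff[OF module_hom_linearI[OF omega_linear_right]]

lemmas alpha_add = module_hom.add[OF module_hom_linearI[OF alpha_linear]]
  and alpha_scale = module_hom.scale[OF module_hom_linearI[OF alpha_linear]]

lemma alpha_inv_right: "\<alpha> (inv \<alpha> x) = x" and alpha_inv_left: "inv \<alpha> (\<alpha> x) = x"
  using alpha_bij by (simp_all add: bij_is_surj surj_f_inv_f bij_is_inj)

lemma alpha_inv_add: "inv \<alpha> (x + y) = inv \<alpha> x + inv \<alpha> y"
  by (metis alpha_add alpha_inv_left alpha_inv_right)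

lemma alpha_inv_scale: "inv \<alpha> (scale c x) = scale c (inv \<alpha> x)"
  by (metis alpha_scale alpha_inv_left alpha_inv_right)

lemma omega_alpha_eqI:
  assumes "\<And>w. \<omega> a (\<alpha> w) = \<omega> b (\<alpha> w)"
  shows "a = b"
proof -
  have "\<omega> (a - b) y = 0" for y
    using assms[of "inv \<alpha> y"] by (simp add: omega_diff_left alpha_inv_right)
  then have "a - b = 0"
    using omega_nondegenerate by blast
  then show ?thesis
    by simp
qed

lemma omega_alpha2_eqI:
  assumes "\<And>t. \<omega> a (\<alpha> (\<alpha> t)) = \<omega> b (\<alpha> (\<alpha> t))"
  shows "a = b"
  using assms[of "inv \<alpha> _"] by (intro omega_alpha_eqI) (simp add: alpha_inv_right)

lemma induced_product_exists:
  assumes "\<exists>S. finite S \<and> span S = UNIV"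
  shows "\<exists>p. \<forall>w. \<omega> p (\<alpha> w) = - \<omega> (\<alpha> z) (B x y w)"
proof -
  obtain Bs where "finite_dimensional_vector_space scale Bs"
    using assms finite_dimensional_if_finite_span by blast
  moreover have "Vector_Spaces.linear scale (*) (\<lambda>w. - \<omega> (\<alpha> z) (B x y (inv \<alpha> w)))"
    unfolding Vector_Spaces.linear_iff
    by (simp add: vector_space_axioms vector_space_field_over_itself alpha_inv_add alpha_inv_scale
        B_add3 B_scale3 omega_add_right omega_scale_right)
  ultimately obtain p where "\<forall>w. \<omega> p w = - \<omega> (\<alpha> z) (B x y (inv \<alpha> w))"
    using finite_dimensional_vector_space.nondegenerate_form_represents_functional
      omega_bilinear omega_nondegenerate by blast
  then have "\<forall>w. \<omega> p (\<alpha> w) = - \<omega> (\<alpha> z) (B x y w)"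
    by (simp add: alpha_inv_left)
  then show ?thesis ..
qed

lemma induced_product_unique_existence:
  assumes "\<exists>S. finite S \<and> span S = UNIV"
  shows "\<exists>!P. \<forall>x y z w. \<omega> (P x y z) (\<alpha> w) = - \<omega> (\<alpha> z) (B x y w)"
proof (rule ex_ex1I)
  show "\<exists>P. \<forall>x y z w. \<omega> (P x y z) (\<alpha> w) = - \<omega> (\<alpha> z) (B x y w)"
    using someI_ex[OF induced_product_exists[OF assms]]
    by (intro exI[of _ "\<lambda>x y z. SOME p. \<forall>w. \<omega> p (\<alpha> w) = - \<omega> (\<alpha> z) (B x y w)"]) simp
next
  fix P Q
  assume "\<forall>x y z w. \<omega> (P x y z) (\<alpha> w) = - \<omega> (\<alpha> z) (B x y w)"
    and "\<forall>x y z w. \<omega> (Q x y z) (\<alpha> w) = - \<omega> (\<alpha> z) (B x y w)"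
  then show "P = Q"
    by (intro ext omega_alpha_eqI) simp
qed

end

locale induced_hom_pre_lie3 = symplectic_hom_lie3_space +
  fixes P
  assumes omega_P: "\<omega> (P x y z) (\<alpha> w) = - \<omega> (\<alpha> z) (B x y w)"
begin

lemma P_cyclic_sum: "P x y z + P y z x + P z x y = B x y z"
proof (rule omega_alpha_eqI)
  fix w
  have swap1: "\<omega> (B z w x) (\<alpha> y) = \<omega> (\<alpha> y) (B z x w)"
    using B_skew_right[of z w x] omega_minus_left omega_skew[of "B z x w" "\<alpha> y"] by simp
  have swap2: "\<omega> (B w x y) (\<alpha> z) = - \<omega> (\<alpha> z) (B x y w)"
    using B_cyclic[of w x y] omega_skew[of "B x y w" "\<alpha> z"] by simp
  have swap3: "\<omega> (B y z w) (\<alpha> x) = - \<omega> (\<alpha> x) (B y z w)"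
    by (rule omega_skew)
  have "\<omega> (B x y z) (\<alpha> w)
      = - \<omega> (\<alpha> x) (B y z w) - \<omega> (\<alpha> y) (B z x w) - \<omega> (\<alpha> z) (B x y w)"
    using omega_B_cyclic[of x y z w] unfolding swap1 swap2 swap3 by algebra
  then show "\<omega> (P x y z + P y z x + P z x y) (\<alpha> w) = \<omega> (B x y z) (\<alpha> w)"
    by (simp add: omega_add_left omega_P)
qed

lemma P_trilinear: "trilinear scale P"
  unfolding trilinear_def Vector_Spaces.linear_iff
  using vector_space_axioms
  by (auto intro!: omega_alpha_eqI simp: omega_P omega_add_left omega_add_right
      omega_scale_left omega_scale_right B_add1 B_add2 B_scale1 B_scale2 alpha_add alpha_scale)

lemma P_skew: "P x y z = - P y x z"
  by (rule omega_alpha_eqI)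
    (simp add: omega_P omega_minus_left omega_minus_right B_skew_left[of y x])

lemma omega_P_P:
  "\<omega> (P (\<alpha> a) (\<alpha> b) (P c d e)) (\<alpha> (\<alpha> t)) = \<omega> (\<alpha> (\<alpha> e)) (B (\<alpha> c) (\<alpha> d) (B a b t))"
proof -
  have "\<omega> (P (\<alpha> a) (\<alpha> b) (P c d e)) (\<alpha> (\<alpha> t)) = - \<omega> (\<alpha> (P c d e)) (\<alpha> (B a b t))"
    by (simp add: omega_P alpha_B)
  also have "\<dots> = - \<omega> (P c d e) (\<alpha> (inv \<alpha> (B a b t)))"
    by (simp add: omega_alpha alpha_inv_right)
  also have "\<dots> = \<omega> (\<alpha> (\<alpha> e)) (\<alpha> (B c d (inv \<alpha> (B a b t))))"
    by (simp add: omega_P omega_alpha)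
  also have "\<dots> = \<omega> (\<alpha> (\<alpha> e)) (B (\<alpha> c) (\<alpha> d) (B a b t))"
    by (simp add: alpha_B alpha_inv_right)
  finally show ?thesis .
qed

lemma P_fundamental_identity:
  "P (\<alpha> x) (\<alpha> y) (P z u v) =
     P (B x y z) (\<alpha> u) (\<alpha> v) + P (\<alpha> z) (B x y u) (\<alpha> v) + P (\<alpha> z) (\<alpha> u) (P x y v)"
  by (rule omega_alpha2_eqI)
    (simp only: omega_add_left omega_P_P, simp add: omega_P fundamental_identity[of x y z u]
      omega_add_right)

lemma P_cyclic_identity:
  "P (B x y z) (\<alpha> u) (\<alpha> v) =
     P (\<alpha> x) (\<alpha> y) (P z u v) + P (\<alpha> y) (\<alpha> z) (P x u v) + P (\<alpha> z) (\<alpha> x) (P y u v)"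
proof (rule omega_alpha2_eqI)
  fix t
  have "B (B x y z) (\<alpha> u) (\<alpha> t) = - (B (\<alpha> z) (\<alpha> u) (B x y t) + B (\<alpha> x) (\<alpha> u) (B y z t)
      + B (\<alpha> y) (\<alpha> u) (B z x t))"
    using skew_fundamental_identity_cyclic[OF B_skew B_minus3 fundamental_identity, of x y z u t]
    by (simp add: algebra_simps eq_neg_iff_add_eq_0)
  then show "\<omega> (P (B x y z) (\<alpha> u) (\<alpha> v)) (\<alpha> (\<alpha> t)) =
      \<omega> (P (\<alpha> x) (\<alpha> y) (P z u v) + P (\<alpha> y) (\<alpha> z) (P x u v) + P (\<alpha> z) (\<alpha> x) (P y u v)) (\<alpha> (\<alpha> t))"
    by (simp only: omega_add_left omega_P_P)
      (simp add: omega_P omega_minus_right omega_diff_right omega_add_right)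
qed

lemma P_hom_pre_lie3: "hom_pre_lie3 scale P \<alpha>"
  unfolding hom_pre_lie3_def Let_def P_cyclic_sum
  using P_trilinear alpha_linear P_skew P_fundamental_identity P_cyclic_identity by blast

end

theorem proposition5p6:
  fixes scale :: "'k::field \<Rightarrow> 'v::ab_group_add \<Rightarrow> 'v"
    and B :: "'v \<Rightarrow> 'v \<Rightarrow> 'v \<Rightarrow> 'v" and \<alpha> :: "'v \<Rightarrow> 'v" and \<omega> :: "'v \<Rightarrow> 'v \<Rightarrow> 'k"
  assumes vs: "vector_space scale"
    and fin: "\<exists>S. finite S \<and> module.span scale S = UNIV"
    and sympl: "symplectic_hom_lie3 scale B \<alpha> \<omega>"
  shows "(\<exists>!P. \<forall>x y z w. \<omega> (P x y z) (\<alpha> w) = - \<omega> (\<alpha> z) (B x y w))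
    \<and> (\<forall>P. (\<forall>x y z w. \<omega> (P x y z) (\<alpha> w) = - \<omega> (\<alpha> z) (B x y w)) \<longrightarrow>
          hom_pre_lie3 scale P \<alpha> \<and> (\<forall>x y z. P x y z + P y z x + P z x y = B x y z))"
proof -
  interpret symplectic_hom_lie3_space scale B \<alpha> \<omega>
    unfolding symplectic_hom_lie3_space_def symplectic_hom_lie3_space_axioms_def
    using vs sympl by blast
  have "hom_pre_lie3 scale P \<alpha> \<and> (\<forall>x y z. P x y z + P y z x + P z x y = B x y z)"
    if "\<forall>x y z w. \<omega> (P x y z) (\<alpha> w) = - \<omega> (\<alpha> z) (B x y w)" for P
  proof -
    interpret induced_hom_pre_lie3 scale B \<alpha> \<omega> P
      using vs sympl that
      unfolding induced_hom_pre_lie3_def induced_hom_pre_lie3_axioms_def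
        symplectic_hom_lie3_space_def symplectic_hom_lie3_space_axioms_def
      by blast
    show ?thesis
      using P_hom_pre_lie3 P_cyclic_sum by blast
  qed
  then show ?thesis
    using induced_product_unique_existence fin by blast
qed

end
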